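(* Let $A$ be an antilinear operator on a complex $n$-dimensional space $W$, $\lambda>0$ real, $W_\lambda^{(k)}=\ker(A^2-\lambda^2 I)^k$ and $\widetilde W_\lambda^{(k)}=\{x\in W:(A-\lambda I)^kx=0\}$. If $v\in W_\lambda^{(k)}$, then there exist unique vectors $v_+,v_-\in\widetilde W_\lambda^{(k)}$ such that $v=v_++iv_-$.
   Context: An antilinear operator satisfies $A(zv+w)=\bar z Av+Aw$. *)

theory Defs
  imports "HOL-Analysis.Analysis"
begin

text \<open>W = complex^'n, an n-dimensional complex space with n = CARD('n).
Scalar multiplication is the componentwise one (*s).\<close>

definition antilinear :: "(complex ^ 'n \<Rightarrow> complex ^ 'n) \<Rightarrow> bool" where
  "antilinear A \<longleftrightarrow> (\<forall>z v w. A (z *s v + w) = cnj z *s A v + A w)"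

definition W_lam :: "(complex ^ 'n \<Rightarrow> complex ^ 'n) \<Rightarrow> real \<Rightarrow> nat \<Rightarrow> (complex ^ 'n) set" where
  "W_lam A l k = {x. ((\<lambda>y. A (A y) - complex_of_real (l\<^sup>2) *s y) ^^ k) x = 0}"

definition Wt_lam :: "(complex ^ 'n \<Rightarrow> complex ^ 'n) \<Rightarrow> real \<Rightarrow> nat \<Rightarrow> (complex ^ 'n) set" where
  "Wt_lam A l k = {x. ((\<lambda>y. A y - complex_of_real l *s y) ^^ k) x = 0}"

end

theory Submission
  imports Defs
begin

text \<open>Write \<open>P = A - \<lambda>\<close> and \<open>Q = A + \<lambda>\<close>. For antilinear \<open>A\<close> both are \<open>\<real>\<close>-linear, they commute,
  \<open>A\<^sup>2 - \<lambda>\<^sup>2 = P Q\<close>, and \<open>Q = P + 2\<lambda>\<close>. Since \<open>2\<lambda> \<noteq> 0\<close>, the kernel of \<open>(P Q)\<^sup>k\<close> is the direct sum of the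
  kernels of \<open>P\<^sup>k\<close> and \<open>Q\<^sup>k\<close>, exactly as for coprime factors of a linear operator. Antilinearity
  gives \<open>P (i x) = - i Q x\<close>, so multiplication by \<open>i\<close> maps \<open>ker Q\<^sup>k\<close> onto \<open>ker P\<^sup>k\<close>; writing the
  \<open>ker Q\<^sup>k\<close>-component as \<open>i v\<^sub>-\<close> yields the decomposition.\<close>

lemma linear_funpow: "linear f \<Longrightarrow> linear (f ^^ n)"
  for f :: "'a::real_vector \<Rightarrow> 'a"
  by (induction n) (auto intro: linear_compose simp: linear_id)

lemma funpow_commute:
  assumes "\<And>x. f (g x) = g (f x)"
  shows "f ((g ^^ n) x) = (g ^^ n) (f x)"
  by (induction n) (simp_all add: assms)

lemma funpow_comp_commute:
  assumes "\<And>x. f (g x) = g (f x)"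
  shows "((\<lambda>x. f (g x)) ^^ n) x = (f ^^ n) ((g ^^ n) x)"
proof (induction n)
  case (Suc n)
  have "(f ^^ n) (g y) = g ((f ^^ n) y)" for y
    using funpow_commute[of g f] assms by metis
  with Suc show ?case by simp
qed simp

lemma funpow_anticommute:
  fixes f :: "'a::real_vector \<Rightarrow> 'a"
  assumes "linear f" and "\<And>x. f (h x) = - h (g x)"
  shows "(f ^^ k) (h x) = (-1) ^ k *\<^sub>R h ((g ^^ k) x)"
  by (induction k) (simp_all add: assms linear_scale[OF assms(1)])

lemma funpow_eigenvector:
  fixes f :: "'a::real_vector \<Rightarrow> 'a"
  assumes "linear f" and "f x = c *\<^sub>R x"
  shows "(f ^^ n) x = c ^ n *\<^sub>R x"
  by (induction n) (simp_all add: assms linear_scale[OF assms(1)])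

lemma linear_kernel_scaled_diff:
  "linear h \<Longrightarrow> h a = 0 \<Longrightarrow> h b = 0 \<Longrightarrow> h ((a - b) /\<^sub>R c) = 0"
  by (simp add: linear_diff linear_scale)

locale shifted_operator =
  fixes f g :: "'a::real_vector \<Rightarrow> 'a" and c :: real
  assumes linear_f: "linear f" and shift: "\<And>x. g x = f x + c *\<^sub>R x" and nonzero: "c \<noteq> 0"
begin

lemma linear_g: "linear g"
  by (rule linearI) (simp_all add: shift linear_add[OF linear_f] linear_scale[OF linear_f] algebra_simps)

lemma commute: "f (g x) = g (f x)"
  by (simp add: shift linear_add[OF linear_f] linear_scale[OF linear_f])

lemma kernels_inter_zero:
  assumes "(f ^^ m) x = 0" and "(g ^^ n) x = 0"
  shows "x = 0"
  using assms
proof (induction m arbitrary: x)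
  case (Suc m)
  have "(f ^^ m) (f x) = 0"
    using Suc.prems(1) by (simp add: funpow_swap1)
  moreover have "(g ^^ n) (f x) = 0"
    using Suc.prems(2) funpow_commute[of f g n x] commute linear_0[OF linear_f] by simp
  ultimately have "f x = 0"
    using Suc.IH by blast
  then have "(g ^^ n) x = c ^ n *\<^sub>R x"
    by (intro funpow_eigenvector linear_g) (simp add: shift)
  with Suc.prems(2) nonzero show ?case by simp
qed simp

lemma kernels_sum:
  assumes "(f ^^ m) ((g ^^ n) v) = 0"
  shows "\<exists>a b. v = a + b \<and> (f ^^ m) a = 0 \<and> (g ^^ n) b = 0"
  using assms
proof (induction m arbitrary: n v)
  case 0 then show ?case by auto
next
  case (Suc m)
  note IH_m = Suc.IH
  show ?case using Suc.prems
  proof (induction n arbitrary: v)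
    case 0 then show ?case by auto
  next
    case (Suc n)
    have "(f ^^ Suc m) ((g ^^ n) (g v)) = 0"
      using Suc.prems by (simp add: funpow_swap1)
    then obtain a\<^sub>1 b\<^sub>1 where gv: "g v = a\<^sub>1 + b\<^sub>1" "(f ^^ Suc m) a\<^sub>1 = 0" "(g ^^ n) b\<^sub>1 = 0"
      using Suc.IH by blast
    have "(f ^^ m) ((g ^^ Suc n) (f v)) = (f ^^ Suc m) ((g ^^ Suc n) v)"
      using funpow_commute[of f g "Suc n" v] commute by (simp add: funpow_swap1)
    then obtain a\<^sub>2 b\<^sub>2 where fv: "f v = a\<^sub>2 + b\<^sub>2" "(f ^^ m) a\<^sub>2 = 0" "(g ^^ Suc n) b\<^sub>2 = 0"
      using IH_m Suc.prems by metis
    have "(f ^^ Suc m) a\<^sub>2 = 0"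
      using fv(2) linear_0[OF linear_f] by simp
    with gv(2) have a: "(f ^^ Suc m) ((a\<^sub>1 - a\<^sub>2) /\<^sub>R c) = 0"
      by (rule linear_kernel_scaled_diff[OF linear_funpow[OF linear_f]])
    have "(g ^^ Suc n) b\<^sub>1 = 0"
      using gv(3) linear_0[OF linear_g] by simp
    from this fv(3) have b: "(g ^^ Suc n) ((b\<^sub>1 - b\<^sub>2) /\<^sub>R c) = 0"
      by (rule linear_kernel_scaled_diff[OF linear_funpow[OF linear_g]])
    have "v = (g v - f v) /\<^sub>R c"
      using nonzero by (simp add: shift)
    also have "\<dots> = (a\<^sub>1 - a\<^sub>2) /\<^sub>R c + (b\<^sub>1 - b\<^sub>2) /\<^sub>R c"
      by (simp add: gv(1) fv(1) algebra_simps)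
    finally show ?case
      using a b by blast
  qed
qed

lemma kernels_direct_sum:
  assumes "(f ^^ m) ((g ^^ n) v) = 0"
  shows "\<exists>!p. (f ^^ m) (fst p) = 0 \<and> (g ^^ n) (snd p) = 0 \<and> v = fst p + snd p"
proof -
  obtain a b where ab: "v = a + b" "(f ^^ m) a = 0" "(g ^^ n) b = 0"
    using kernels_sum[OF assms] by blast
  show ?thesis
  proof (rule ex1I[of _ "(a, b)"])
    fix p assume p: "(f ^^ m) (fst p) = 0 \<and> (g ^^ n) (snd p) = 0 \<and> v = fst p + snd p"
    have "fst p - a = b - snd p"
      using p ab(1) by (simp add: algebra_simps)
    moreover have "(f ^^ m) (fst p - a) = 0"
      using p ab(2) linear_diff[OF linear_funpow[OF linear_f]] by simp
    moreover have "(g ^^ n) (b - snd p) = 0"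
      using p ab(3) linear_diff[OF linear_funpow[OF linear_g]] by simp
    ultimately have "fst p - a = 0"
      using kernels_inter_zero by metis
    with p ab(1) show "p = (a, b)"
      by (simp add: prod_eq_iff)
  qed (use ab in simp)
qed

end

lemma Ex1_reindex:
  assumes "\<And>x. h' (h x) = x" and "\<And>y. h (h' y) = y"
  shows "(\<exists>!x. P (h x)) \<longleftrightarrow> (\<exists>!y. P y)"
  by (metis assms)

definition shift_op :: "('a::real_vector \<Rightarrow> 'a) \<Rightarrow> real \<Rightarrow> 'a \<Rightarrow> 'a" where
  "shift_op f c x = f x + c *\<^sub>R x"

lemma of_real_smult_eq_scaleR: "complex_of_real r *s x = r *\<^sub>R x"
  unfolding vec_eq_iff vector_scaleR_component vector_smult_component by (simp add: scaleR_conv_of_real)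

lemma antilinear_add: "antilinear A \<Longrightarrow> A (x + y) = A x + A y"
  unfolding antilinear_def by (metis vector_smult_lid complex_cnj_one)

lemma antilinear_zero: "antilinear A \<Longrightarrow> A 0 = 0"
  using antilinear_add[of A 0 0] by simp

lemma antilinear_smult: "antilinear A \<Longrightarrow> A (z *s x) = cnj z *s A x"
  using antilinear_zero[of A] unfolding antilinear_def by (metis add.right_neutral)

lemma antilinear_diff: "antilinear A \<Longrightarrow> A (x - y) = A x - A y"
  using antilinear_add[of A "x - y" y] by (simp add: algebra_simps)

lemma antilinear_scaleR: "antilinear A \<Longrightarrow> A (r *\<^sub>R x) = r *\<^sub>R A x"
  using antilinear_smult[of A "complex_of_real r"] by (simp add: of_real_smult_eq_scaleR)

lemma linear_shift_op_antilinear: "antilinear A \<Longrightarrow> linear (shift_op A c)"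
  by (rule linearI) (simp_all add: shift_op_def antilinear_add antilinear_scaleR algebra_simps)

lemma shifted_operator_antilinear:
  assumes "antilinear A" and "l \<noteq> 0"
  shows "shifted_operator (shift_op A (- l)) (shift_op A l) (2 * l)"
proof -
  have "shift_op A l x = shift_op A (- l) x + (2 * l) *\<^sub>R x" for x
    unfolding shift_op_def mult_2 scaleR_add_left by (simp add: algebra_simps)
  with assms linear_shift_op_antilinear[OF assms(1)] show ?thesis
    by (simp add: shifted_operator_def)
qed

lemma shift_op_antilinear_times_i:
  "antilinear A \<Longrightarrow> shift_op A c (\<i> *s x) = - (\<i> *s shift_op A (- c) x)"
  by (simp add: shift_op_def antilinear_smult vec_eq_iff algebra_simps)

lemma funpow_shift_op_antilinear_times_i:
  assumes "antilinear A"
  shows "(shift_op A c ^^ k) (\<i> *s x) = 0 \<longleftrightarrow> (shift_op A (- c) ^^ k) x = 0"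
  using funpow_anticommute[OF linear_shift_op_antilinear[OF assms],
      where h = "(*s) \<i>" and g = "shift_op A (- c)"]
  by (simp add: shift_op_antilinear_times_i[OF assms])

lemma Wt_lam_eq: "Wt_lam A l k = {x. (shift_op A (- l) ^^ k) x = 0}"
  by (simp add: Wt_lam_def shift_op_def[abs_def] of_real_smult_eq_scaleR)

lemma W_lam_eq:
  assumes "antilinear A"
  shows "W_lam A l k = {x. (shift_op A (- l) ^^ k) ((shift_op A l ^^ k) x) = 0}"
proof -
  have square: "(\<lambda>y. A (A y) - complex_of_real (l\<^sup>2) *s y) = (\<lambda>y. shift_op A (- l) (shift_op A l y))"
    unfolding of_real_smult_eq_scaleR
    by (simp add: shift_op_def antilinear_add[OF assms] antilinear_scaleR[OF assms]
        algebra_simps power2_eq_square)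
  have commute: "shift_op A (- l) (shift_op A l x) = shift_op A l (shift_op A (- l) x)" for x
    by (simp add: shift_op_def antilinear_add[OF assms] antilinear_diff[OF assms]
        antilinear_scaleR[OF assms] algebra_simps)
  show ?thesis
    by (simp only: W_lam_def square funpow_comp_commute[of "shift_op A (- l)" "shift_op A l", OF commute])
qed

theorem mainTheorem6:
  fixes A :: "complex ^ 'n \<Rightarrow> complex ^ 'n" and l :: real and k :: nat and v :: "complex ^ 'n"
  assumes "antilinear A" and "l > 0" and "v \<in> W_lam A l k"
  shows "\<exists>!p. fst p \<in> Wt_lam A l k \<and> snd p \<in> Wt_lam A l k \<and> v = fst p + \<i> *s snd p"
proof -
  let ?P = "shift_op A (- l)" and ?Q = "shift_op A l"
  interpret shifted_operator ?P ?Q "2 * l"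
    by (rule shifted_operator_antilinear[OF assms(1)]) (use assms(2) in simp)
  let ?K = "\<lambda>q. (?P ^^ k) (fst q) = 0 \<and> (?Q ^^ k) (snd q) = 0 \<and> v = fst q + snd q"
  have "\<exists>!q. ?K q"
    using assms(3) by (intro kernels_direct_sum) (simp add: W_lam_eq[OF assms(1)])
  moreover have "(\<exists>!p. ?K (fst p, \<i> *s snd p)) \<longleftrightarrow> (\<exists>!q. ?K q)"
    by (rule Ex1_reindex[where h' = "\<lambda>q. (fst q, - \<i> *s snd q)"]) (simp_all add: vec_eq_iff)
  ultimately have "\<exists>!p. ?K (fst p, \<i> *s snd p)"
    by simp
  then show ?thesis
    by (simp add: Wt_lam_eq funpow_shift_op_antilinear_times_i[OF assms(1)])
qed

end
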